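(* Let $A=\begin{pmatrix}3&2&1&0\\2&3&2&1\\1&2&2&1\\0&1&1&1\end{pmatrix}$ and $f(x)=x^\top A x$ for $x\in\mathbb{Z}^4$. Then $f$ is multimodular, but its projection to $U=\{1,2,4\}$, namely $f^U(y_1,y_2,y_4)=\inf_{z\in\mathbb{Z}} f(y_1,y_2,z,y_4)$, regarded as a function of $(y_1,y_2,y_4)\in\mathbb{Z}^3$ in this order, is finite everywhere and is not multimodular. In particular, the projection of a multimodular function to a non-interval subset of variables need not be multimodular.
   Context: For $f:\mathbb{Z}^n\to\mathbb{R}\cup\{+\infty\}$, $\mathrm{dom}\, f=\{x\in\mathbb{Z}^n: f(x)<+\infty\}$. Let $e_i$ denote the $i$-th unit vector of $\mathbb{Z}^n$ and $\mathcal{F}=\{-e_1,\ e_1-e_2,\ e_2-e_3,\ \dots,\ e_{n-1}-e_n,\ e_n\}$. A function $f:\mathbb{Z}^n\to\mathbb{R}\cup\{+\infty\}$ is called multimodular if $\mathrm{dom}\, f\neq\emptyset$ and $f(z+d)+f(z+d')\ge f(z)+f(z+d+d')$ for all $z\in\mathrm{dom}\, f$ and all distinct $d,d'\in\mathcal{F}$ (with the usual conventions for $+\infty$). *)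

theory Defs
  imports "HOL-Library.Extended_Real"
begin

text \<open>Points of Z^n are represented as integer lists of length n; coordinate i
  (1-based in the paper) is the list entry at position i-1.
  Values in R extended by +infinity are represented in ereal.\<close>

definition vadd :: "int list \<Rightarrow> int list \<Rightarrow> int list" where
  "vadd x y = map2 (+) x y"

definition unitv :: "nat \<Rightarrow> nat \<Rightarrow> int list" where
  "unitv n i = map (\<lambda>k. if k = i - 1 then 1 else 0) [0..<n]"

definition vneg :: "int list \<Rightarrow> int list" where
  "vneg x = map uminus x"

definition mmF :: "nat \<Rightarrow> int list set" where
  "mmF n = {vneg (unitv n 1), unitv n n}
           \<union> {vadd (unitv n i) (vneg (unitv n (i+1))) | i. 1 \<le> i \<and> i < n}"

definition multimodular :: "nat \<Rightarrow> (int list \<Rightarrow> ereal) \<Rightarrow> bool" where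
  "multimodular n f \<longleftrightarrow>
     (\<forall>x. length x = n \<longrightarrow> f x \<noteq> -\<infinity>) \<and>
     (\<exists>x. length x = n \<and> f x < \<infinity>) \<and>
     (\<forall>z d d'. length z = n \<and> f z < \<infinity> \<and> d \<in> mmF n \<and> d' \<in> mmF n \<and> d \<noteq> d' \<longrightarrow>
        f (vadd z d) + f (vadd z d') \<ge> f z + f (vadd (vadd z d) d'))"

definition matA :: "nat \<Rightarrow> nat \<Rightarrow> int" where
  "matA i j = [[3,2,1,0],[2,3,2,1],[1,2,2,1],[0,1,1,1]] ! i ! j"

definition fA :: "int list \<Rightarrow> ereal" where
  "fA x = ereal (real_of_int (\<Sum>i<4. \<Sum>j<4. matA i j * x ! i * x ! j))"

definition fU :: "int list \<Rightarrow> ereal" where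
  "fU y = (INF z::int. fA [y ! 0, y ! 1, z, y ! 2])"

end

theory Submission
  imports Defs
begin

(* For a quadratic form the mixed second difference along d, d' is
   f(z+d) + f(z+d') - f(z) - f(z+d+d') = -2 d^T A d', independently of z; so f is
   multimodular as soon as d^T A d' <= 0 for distinct d, d' in F, a finite check.
   Minimising over the third coordinate gives the closed form
   f^U(a,b,e) = f(a, b, -floor((a+2b+e)/2), e), and this rounding breaks the
   multimodular inequality at z = -e1 for d = e1 - e2, d' = e2 - e3. *)

definition bilA :: "int list \<Rightarrow> int list \<Rightarrow> int" where
  "bilA x y = (\<Sum>i<4. \<Sum>j<4. matA i j * x ! i * y ! j)"

lemma fA_eq_bilA: "fA x = ereal (real_of_int (bilA x x))"
  by (simp add: fA_def bilA_def)

lemma bilA_Cons4: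
  "bilA [a, b, c, e] [a', b', c', e'] =
     3*a*a' + 2*a*b' + a*c' + 2*b*a' + 3*b*b' + 2*b*c' + b*e'
     + c*a' + 2*c*b' + 2*c*c' + c*e' + e*b' + e*c' + e*e'"
  by (simp add: bilA_def matA_def eval_nat_numeral lessThan_Suc algebra_simps)

lemma fA_Cons4:
  "fA [a, b, c, e] =
     ereal (real_of_int (3*a*a + 3*b*b + 2*c*c + e*e + 4*a*b + 2*a*c + 4*b*c + 2*b*e + 2*c*e))"
  by (simp add: fA_eq_bilA bilA_Cons4 algebra_simps)

lemma length_4_conv: "length x = 4 \<longleftrightarrow> (\<exists>a b c e. x = [a, b, c, e])"
  by (auto simp: length_Suc_conv eval_nat_numeral)

lemma length_3_conv: "length x = 3 \<longleftrightarrow> (\<exists>a b e. x = [a, b, e])"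
  by (auto simp: length_Suc_conv eval_nat_numeral)

lemma bilA_second_difference:
  assumes "length z = 4" "length d = 4" "length d' = 4"
  shows "bilA (vadd z d) (vadd z d) + bilA (vadd z d') (vadd z d') =
         bilA z z + bilA (vadd (vadd z d) d') (vadd (vadd z d) d') - 2 * bilA d d'"
  using assms by (auto simp: length_4_conv vadd_def bilA_Cons4 algebra_simps)

lemma mmF_4: "mmF 4 = {[-1,0,0,0], [1,-1,0,0], [0,1,-1,0], [0,0,1,-1], [0,0,0,1]}"
proof -
  have "{i::nat. 1 \<le> i \<and> i < 4} = {1, 2, 3}" by auto
  then have "{vadd (unitv 4 i) (vneg (unitv 4 (i+1))) | i. 1 \<le> i \<and> i < 4}
           = (\<lambda>i. vadd (unitv 4 i) (vneg (unitv 4 (i+1)))) ` {1, 2, 3}" by blast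
  then show ?thesis
    by (simp add: mmF_def vadd_def vneg_def unitv_def upt_rec insert_commute)
qed

lemma mmF_3: "mmF 3 = {[-1,0,0], [1,-1,0], [0,1,-1], [0,0,1]}"
proof -
  have "{i::nat. 1 \<le> i \<and> i < 3} = {1, 2}" by auto
  then have "{vadd (unitv 3 i) (vneg (unitv 3 (i+1))) | i. 1 \<le> i \<and> i < 3}
           = (\<lambda>i. vadd (unitv 3 i) (vneg (unitv 3 (i+1)))) ` {1, 2}" by blast
  then show ?thesis
    by (simp add: mmF_def vadd_def vneg_def unitv_def upt_rec insert_commute)
qed

lemma bilA_mmF_nonpos: "d \<in> mmF 4 \<Longrightarrow> d' \<in> mmF 4 \<Longrightarrow> d \<noteq> d' \<Longrightarrow> bilA d d' \<le> 0"
  by (auto simp: mmF_4 bilA_Cons4)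

lemma multimodular_fA: "multimodular 4 fA"
  unfolding multimodular_def
proof (intro conjI allI impI)
  show "fA x \<noteq> -\<infinity>" for x by (simp add: fA_eq_bilA)
  show "\<exists>x. length x = 4 \<and> fA x < \<infinity>"
    by (intro exI[of _ "[0, 0, 0, 0]"]) (simp add: fA_Cons4)
next
  fix z d d'
  assume "length z = 4 \<and> fA z < \<infinity> \<and> d \<in> mmF 4 \<and> d' \<in> mmF 4 \<and> d \<noteq> d'"
  then have z: "length z = 4" and d: "d \<in> mmF 4" "d' \<in> mmF 4" "d \<noteq> d'" by auto
  have "length d = 4" "length d' = 4" using d by (auto simp: mmF_4)
  with z have "bilA z z + bilA (vadd (vadd z d) d') (vadd (vadd z d) d')
      \<le> bilA (vadd z d) (vadd z d) + bilA (vadd z d') (vadd z d')"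
    using bilA_second_difference[of z d d'] bilA_mmF_nonpos[OF d] by linarith
  then show "fA z + fA (vadd (vadd z d) d') \<le> fA (vadd z d) + fA (vadd z d')"
    unfolding fA_eq_bilA plus_ereal.simps ereal_less_eq(3) by linarith
qed

lemma int_quadratic_min_at_neg_half:
  fixes z s :: int
  shows "(- (s div 2)) * (- (s div 2) + s) \<le> z * (z + s)"
proof -
  define k where "k = s div 2"
  have s: "s = 2*k + s mod 2" and r: "s mod 2 = 0 \<or> s mod 2 = 1"
    unfolding k_def by auto
  have "0 \<le> (z + k) * (z + k + s mod 2)"
    using r by (cases "0 \<le> z + k") (auto simp: mult_nonpos_nonpos)
  then show ?thesis
    unfolding k_def[symmetric] by (subst (1 2) s) (simp add: algebra_simps)
qed

lemma fU_Cons3: "fU [a, b, e] = fA [a, b, - ((a + 2*b + e) div 2), e]"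
proof -
  let ?m = "- ((a + 2*b + e) div 2)"
  have "fA [a, b, ?m, e] \<le> fA [a, b, z, e]" for z
    using int_quadratic_min_at_neg_half[of "a + 2*b + e" z]
    unfolding fA_Cons4 ereal_less_eq(3) of_int_le_iff by (simp add: algebra_simps)
  then have "fA [a, b, ?m, e] = (INF z. fA [a, b, z, e])"
    by (intro antisym INF_greatest INF_lower2[of ?m]) auto
  then show ?thesis by (simp add: fU_def)
qed

lemma fU_finite: "length y = 3 \<Longrightarrow> fU y \<noteq> \<infinity> \<and> fU y \<noteq> -\<infinity>"
  by (auto simp: length_3_conv fU_Cons3 fA_eq_bilA)

lemma not_multimodular_fU: "\<not> multimodular 3 fU"
proof
  assume "multimodular 3 fU"
  then have "fU [-1,0,0] + fU (vadd (vadd [-1,0,0] [1,-1,0]) [0,1,-1])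
           \<le> fU (vadd [-1,0,0] [1,-1,0]) + fU (vadd [-1,0,0] [0,1,-1])"
    unfolding multimodular_def mmF_3
    by (elim conjE allE[of _ "[-1,0,0]"] allE[of _ "[1,-1,0]"] allE[of _ "[0,1,-1]"])
       (simp add: fU_Cons3 fA_Cons4)
  \<comment> \<open>the two sides evaluate to 3 + 1 and 1 + 1\<close>
  then show False by (simp add: vadd_def fU_Cons3 fA_Cons4)
qed

theorem mainTheorem10:
  shows "multimodular 4 fA \<and>
         (\<forall>y. length y = 3 \<longrightarrow> fU y \<noteq> \<infinity> \<and> fU y \<noteq> -\<infinity>) \<and>
         \<not> multimodular 3 fU"
  using multimodular_fA fU_finite not_multimodular_fU by blast

end
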